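(* Let $d\ge1$ and $t\ge1$ be integers and $\nu\in(0,1)$. Define $r>0$ by \[ r^2=(1-\nu)\frac{d+2}{t(t+d)}. \] Then $\widetilde P^{(\frac d2,\frac d2-1)}_t(\cos\phi)\ge\nu$ for all $0\le\phi\le r$.
   Context: For $\alpha,\beta>-1$, $P^{(\alpha,\beta)}_t$ denotes the Jacobi polynomial of degree $t$ (orthogonal on $[-1,1]$ with respect to $(1-u)^\alpha(1+u)^\beta$), normalized by $P^{(\alpha,\beta)}_t(1)=\binom{t+\alpha}{t}$ with $\binom{x}{y}=\frac{\Gamma(x+1)}{\Gamma(y+1)\Gamma(x-y+1)}$. The normalized Jacobi polynomial is $\widetilde P^{(\alpha,\beta)}_t:=P^{(\alpha,\beta)}_t/P^{(\alpha,\beta)}_t(1)$. *)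

theory Defs
  imports "HOL-Analysis.Analysis"
begin

definition gbinom :: "real \<Rightarrow> real \<Rightarrow> real" where
  "gbinom x y = Gamma (x + 1) / (Gamma (y + 1) * Gamma (x - y + 1))"

text \<open>Jacobi polynomial of degree t (standard explicit formula,
  Szego (4.3.2)), valid for alpha, beta > -1; P(1) = binom(t+alpha, t).\<close>
definition jacobiP :: "nat \<Rightarrow> real \<Rightarrow> real \<Rightarrow> real \<Rightarrow> real" where
  "jacobiP t \<alpha> \<beta> u =
     (\<Sum>s\<le>t. gbinom (real t + \<alpha>) (real t - real s) * gbinom (real t + \<beta>) (real s)
              * ((u - 1) / 2) ^ s * ((u + 1) / 2) ^ (t - s))"

definition jacobiP_normalized :: "nat \<Rightarrow> real \<Rightarrow> real \<Rightarrow> real \<Rightarrow> real" where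
  "jacobiP_normalized t \<alpha> \<beta> u = jacobiP t \<alpha> \<beta> u / jacobiP t \<alpha> \<beta> 1"

end

theory Submission
  imports Defs "HOL-Computational_Algebra.Formal_Power_Series"
begin

text \<open>In the variable \<open>x = (1 - u) / 2\<close> the Jacobi polynomial is the alternating sum
  \<open>P\<^sub>t(1 - 2x) = \<Sum>\<^sub>k (-1)\<^sup>k c\<^sub>k x\<^sup>k\<close> with positive coefficients satisfying
  \<open>c\<^sub>k\<^sub>+\<^sub>1 (k + 1)(\<alpha> + k + 1) = c\<^sub>k (t - k)(t + \<alpha> + \<beta> + k + 1)\<close>.
  As long as \<open>t (t + \<alpha> + \<beta> + 1) x \<le> \<alpha> + 1\<close> the terms \<open>c\<^sub>k x\<^sup>k\<close> decrease, so the sum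
  is at least its first two terms, giving
  \<open>P\<^sub>t(1 - 2x) / P\<^sub>t(1) \<ge> 1 - t (t + \<alpha> + \<beta> + 1) x / (\<alpha> + 1)\<close>.
  For \<open>u = cos \<phi>\<close> we have \<open>x = sin\<^sup>2(\<phi>/2) \<le> \<phi>\<^sup>2/4\<close>; with \<open>\<alpha> = d/2\<close>, \<open>\<beta> = d/2 - 1\<close> and
  \<open>\<phi> \<le> r\<close> the bound becomes \<open>1 - (1 - \<nu>)/2 \<ge> \<nu>\<close>.\<close>

lemma gbinom_eq_gbinomial:
  assumes "x > -1"
  shows "gbinom x (real k) = x gchoose k"
proof -
  have "x + 1 \<notin> \<int>\<^sub>\<le>\<^sub>0" using assms by (auto elim!: nonpos_Ints_cases)
  hence "x gchoose k = Gamma (x + 1) / (fact k * Gamma (x - of_nat k + 1))"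
    by (rule gbinomial_Gamma)
  moreover have "Gamma (real k + 1) = fact k" using Gamma_fact[of k] by (simp add: add.commute)
  ultimately show ?thesis unfolding gbinom_def by simp
qed

lemma jacobiP_gbinomial:
  assumes "\<alpha> > -1" "\<beta> > -1"
  shows "jacobiP t \<alpha> \<beta> u = (\<Sum>s\<le>t. ((real t + \<alpha>) gchoose (t - s)) * ((real t + \<beta>) gchoose s)
                                  * ((u - 1) / 2) ^ s * ((u + 1) / 2) ^ (t - s))"
  unfolding jacobiP_def
proof (intro sum.cong refl)
  fix s assume "s \<in> {..t}"
  hence "real t - real s = real (t - s)" by (simp add: of_nat_diff)
  moreover have "gbinom (real t + \<alpha>) (real (t - s)) = (real t + \<alpha>) gchoose (t - s)"
    "gbinom (real t + \<beta>) (real s) = (real t + \<beta>) gchoose s"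
    using assms by (intro gbinom_eq_gbinomial; simp)+
  ultimately show "gbinom (real t + \<alpha>) (real t - real s) * gbinom (real t + \<beta>) (real s)
      * ((u - 1) / 2) ^ s * ((u + 1) / 2) ^ (t - s)
    = ((real t + \<alpha>) gchoose (t - s)) * ((real t + \<beta>) gchoose s)
      * ((u - 1) / 2) ^ s * ((u + 1) / 2) ^ (t - s)"
    by (simp only:)
qed

definition jacobi_coeff :: "nat \<Rightarrow> real \<Rightarrow> real \<Rightarrow> nat \<Rightarrow> real" where
  "jacobi_coeff t \<alpha> \<beta> k = ((real t + \<alpha>) gchoose (t - k)) * ((real t + \<alpha> + \<beta> + real k) gchoose k)"

lemma sum_gbinomial_choose_eq_jacobi_coeff:
  assumes "k \<le> t"
  shows "(\<Sum>s\<le>k. ((real t + \<alpha>) gchoose (t - s)) * ((real t + \<beta>) gchoose s)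
                  * real ((t - s) choose (k - s)))
     = jacobi_coeff t \<alpha> \<beta> k"
proof -
  have revision: "((real t + \<alpha>) gchoose (t - s)) * real ((t - s) choose (k - s))
      = ((real t + \<alpha>) gchoose (t - k)) * ((\<alpha> + real k) gchoose (k - s))" if "s \<le> k" for s
  proof -
    have "(t - s) choose (k - s) = (t - s) choose (t - k)"
      using binomial_symmetric[of "k - s" "t - s"] that assms by (simp add: diff_diff_eq)
    hence "real ((t - s) choose (k - s)) = real (t - s) gchoose (t - k)"
      by (simp add: binomial_gbinomial)
    moreover have "((real t + \<alpha>) gchoose (t - s)) * (real (t - s) gchoose (t - k))
       = ((real t + \<alpha>) gchoose (t - k)) * ((real t + \<alpha> - real (t - k)) gchoose ((t - s) - (t - k)))"
      using that assms by (intro gbinomial_trinomial_revision) simp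
    moreover have "real t + \<alpha> - real (t - k) = \<alpha> + real k" using assms by (simp add: of_nat_diff)
    moreover have "(t - s) - (t - k) = k - s" using that assms by simp
    ultimately show ?thesis by simp
  qed
  have "(\<Sum>s\<le>k. ((real t + \<alpha>) gchoose (t - s)) * ((real t + \<beta>) gchoose s)
                  * real ((t - s) choose (k - s)))
     = ((real t + \<alpha>) gchoose (t - k))
       * (\<Sum>s\<le>k. ((real t + \<beta>) gchoose s) * ((\<alpha> + real k) gchoose (k - s)))"
    unfolding sum_distrib_left
  proof (intro sum.cong refl)
    fix s assume "s \<in> {..k}"
    then show "((real t + \<alpha>) gchoose (t - s)) * ((real t + \<beta>) gchoose s) * real ((t - s) choose (k - s))
        = ((real t + \<alpha>) gchoose (t - k)) * (((real t + \<beta>) gchoose s) * ((\<alpha> + real k) gchoose (k - s)))"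
      using revision[of s] by (simp add: ac_simps)
  qed
  also have "(\<Sum>s\<le>k. ((real t + \<beta>) gchoose s) * ((\<alpha> + real k) gchoose (k - s)))
      = (real t + \<beta> + (\<alpha> + real k)) gchoose k"
    using gbinomial_Vandermonde[of "real t + \<beta>" "\<alpha> + real k" k] by (simp add: atLeast0AtMost)
  finally show ?thesis unfolding jacobi_coeff_def by (simp add: algebra_simps)
qed

lemma jacobiP_one_minus_two_x:
  assumes "\<alpha> > -1" "\<beta> > -1"
  shows "jacobiP t \<alpha> \<beta> (1 - 2 * x) = (\<Sum>k\<le>t. (-1) ^ k * jacobi_coeff t \<alpha> \<beta> k * x ^ k)"
proof -
  define g where "g s j = ((real t + \<alpha>) gchoose (t - s)) * ((real t + \<beta>) gchoose s)
                           * real ((t - s) choose j) * (-x) ^ (s + j)" for s j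
  have "(1 - 2 * x - 1) / 2 = -x" "(1 - 2 * x + 1) / 2 = 1 - x" by simp_all
  then have "jacobiP t \<alpha> \<beta> (1 - 2 * x)
      = (\<Sum>s\<le>t. ((real t + \<alpha>) gchoose (t - s)) * ((real t + \<beta>) gchoose s) * (-x) ^ s * (1 - x) ^ (t - s))"
    unfolding jacobiP_gbinomial[OF assms] by (simp only:)
  also have "\<dots> = (\<Sum>s\<le>t. \<Sum>j\<le>t - s. g s j)"
  proof (intro sum.cong refl)
    fix s
    have "(1 - x) ^ (t - s) = (\<Sum>j\<le>t - s. real ((t - s) choose j) * (-x) ^ j)"
      using binomial_ring[of "-x" 1 "t - s"] by simp
    then show "((real t + \<alpha>) gchoose (t - s)) * ((real t + \<beta>) gchoose s) * (-x) ^ s * (1 - x) ^ (t - s)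
        = (\<Sum>j\<le>t - s. g s j)"
      unfolding g_def by (simp add: sum_distrib_left power_add mult_ac)
  qed
  also have "\<dots> = (\<Sum>(s, j)\<in>(SIGMA s:{..t}. {..t - s}). g s j)"
    by (rule sum.Sigma) auto
  also have "(SIGMA s:{..t}. {..t - s}) = {(i, j). i + j \<le> t}"
    by auto
  also have "(\<Sum>(s, j)\<in>{(i, j). i + j \<le> t}. g s j) = (\<Sum>k\<le>t. \<Sum>s\<le>k. g s (k - s))"
    by (rule sum.triangle_reindex_eq)
  also have "\<dots> = (\<Sum>k\<le>t. (-1) ^ k * jacobi_coeff t \<alpha> \<beta> k * x ^ k)"
  proof (intro sum.cong refl)
    fix k assume "k \<in> {..t}"
    hence "(\<Sum>s\<le>k. g s (k - s))
        = (\<Sum>s\<le>k. ((real t + \<alpha>) gchoose (t - s)) * ((real t + \<beta>) gchoose s)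
                    * real ((t - s) choose (k - s))) * (-x) ^ k"
      unfolding sum_distrib_right g_def by (intro sum.cong refl) auto
    also have "\<dots> = jacobi_coeff t \<alpha> \<beta> k * (-x) ^ k"
      using \<open>k \<in> {..t}\<close> by (simp add: sum_gbinomial_choose_eq_jacobi_coeff)
    finally show "(\<Sum>s\<le>k. g s (k - s)) = (-1) ^ k * jacobi_coeff t \<alpha> \<beta> k * x ^ k"
      by (simp only: power_minus[of x k] mult.assoc mult.commute mult.left_commute)
  qed
  finally show ?thesis .
qed

lemma jacobiP_at_one:
  assumes "\<alpha> > -1" "\<beta> > -1"
  shows "jacobiP t \<alpha> \<beta> 1 = jacobi_coeff t \<alpha> \<beta> 0"
  using jacobiP_one_minus_two_x[OF assms, of t 0] by (simp add: sum.atMost_shift)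

lemma gbinomial_pos:
  fixes a :: "'a::linordered_field"
  assumes "of_nat n < a + 1"
  shows "0 < a gchoose n"
proof -
  have "of_nat i < a" if "i < n" for i
  proof -
    have "of_nat (Suc i) \<le> (of_nat n :: 'a)"
      using that by (simp only: of_nat_le_iff Suc_le_eq)
    with assms show ?thesis by simp
  qed
  then have "0 < (\<Prod>i = 0..<n. a - of_nat i)"
    by (intro prod_pos) simp
  then show ?thesis by (simp add: gbinomial_prod_rev)
qed

lemma jacobi_coeff_pos:
  assumes "\<alpha> > -1" "\<beta> > -1" "k \<le> t"
  shows "0 < jacobi_coeff t \<alpha> \<beta> k"
proof (cases "k = 0")
  case True
  with assms show ?thesis
    unfolding jacobi_coeff_def by (auto intro!: gbinomial_pos)
next
  case False
  with assms show ?thesis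
    unfolding jacobi_coeff_def by (intro mult_pos_pos gbinomial_pos) (auto simp: of_nat_diff)
qed

lemma jacobi_coeff_Suc:
  assumes "k < t"
  shows "jacobi_coeff t \<alpha> \<beta> (Suc k) * ((\<alpha> + real k + 1) * (real k + 1))
       = jacobi_coeff t \<alpha> \<beta> k * ((real t - real k) * (real t + \<alpha> + \<beta> + real k + 1))"
proof -
  define j where "j = t - Suc k"
  define R where "R = real t + \<alpha>"
  define a where "a = real t + \<alpha> + \<beta> + real k"
  have j: "t - k = Suc j" "real (Suc j) = real t - real k"
    using assms unfolding j_def by (simp_all add: of_nat_diff)
  have first: "real (Suc j) * (R gchoose Suc j) = (\<alpha> + real k + 1) * (R gchoose j)"
    using gbinomial_mult_1[of R j] assms unfolding j_def R_def by (simp add: of_nat_diff algebra_simps)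
  have second: "real (Suc k) * ((a + 1) gchoose Suc k) = (a + 1) * (a gchoose k)"
    by (rule Suc_times_gbinomial)
  have "jacobi_coeff t \<alpha> \<beta> (Suc k) * ((\<alpha> + real k + 1) * (real k + 1))
      = ((\<alpha> + real k + 1) * (R gchoose j)) * (real (Suc k) * ((a + 1) gchoose Suc k))"
    unfolding jacobi_coeff_def R_def a_def j_def by (simp add: algebra_simps)
  also have "\<dots> = (real (Suc j) * (R gchoose Suc j)) * ((a + 1) * (a gchoose k))"
    unfolding first second ..
  also have "\<dots> = jacobi_coeff t \<alpha> \<beta> k * ((real t - real k) * (a + 1))"
    unfolding jacobi_coeff_def R_def a_def j by (simp add: algebra_simps)
  finally show ?thesis unfolding a_def by (simp add: algebra_simps)
qed

lemma jacobi_coeff_Suc_mult_le: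
  assumes "\<alpha> > -1" "\<beta> > -1" "k < t" "0 \<le> x"
    and small: "real t * (real t + \<alpha> + \<beta> + 1) * x \<le> \<alpha> + 1"
  shows "jacobi_coeff t \<alpha> \<beta> (Suc k) * x \<le> jacobi_coeff t \<alpha> \<beta> k"
proof -
  have "real t * (real t + \<alpha> + \<beta> + 1) - (real t - real k) * (real t + \<alpha> + \<beta> + real k + 1)
      = real k * (\<alpha> + \<beta> + 1 + real k)"
    by (simp add: algebra_simps)
  moreover have "0 \<le> real k * (\<alpha> + \<beta> + 1 + real k)"
    using assms by (cases "k = 0") (auto intro!: mult_nonneg_nonneg)
  ultimately have "(real t - real k) * (real t + \<alpha> + \<beta> + real k + 1) \<le> real t * (real t + \<alpha> + \<beta> + 1)"
    by linarith
  then have "(real t - real k) * (real t + \<alpha> + \<beta> + real k + 1) * x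
      \<le> real t * (real t + \<alpha> + \<beta> + 1) * x"
    using \<open>0 \<le> x\<close> by (rule mult_right_mono)
  also have "\<dots> \<le> \<alpha> + 1"
    by (rule small)
  also have "\<alpha> + 1 \<le> (\<alpha> + real k + 1) * (real k + 1)"
  proof -
    have "(\<alpha> + real k + 1) * (real k + 1) = \<alpha> + 1 + real k * (\<alpha> + real k + 2)"
      by (simp add: algebra_simps)
    moreover have "0 \<le> real k * (\<alpha> + real k + 2)"
      using assms by simp
    ultimately show ?thesis by linarith
  qed
  finally have ratio_le: "(real t - real k) * (real t + \<alpha> + \<beta> + real k + 1) * x
      \<le> (\<alpha> + real k + 1) * (real k + 1)" .
  have "jacobi_coeff t \<alpha> \<beta> (Suc k) * x * ((\<alpha> + real k + 1) * (real k + 1))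
      = jacobi_coeff t \<alpha> \<beta> (Suc k) * ((\<alpha> + real k + 1) * (real k + 1)) * x"
    by (simp only: ac_simps)
  also have "\<dots> = jacobi_coeff t \<alpha> \<beta> k * ((real t - real k) * (real t + \<alpha> + \<beta> + real k + 1) * x)"
    unfolding jacobi_coeff_Suc[OF \<open>k < t\<close>] by (simp only: ac_simps)
  also have "\<dots> \<le> jacobi_coeff t \<alpha> \<beta> k * ((\<alpha> + real k + 1) * (real k + 1))"
    using ratio_le jacobi_coeff_pos[of \<alpha> \<beta> k t] assms by (intro mult_left_mono) auto
  finally show ?thesis
    by (rule mult_right_le_imp_le) (use assms in simp)
qed

lemma alternating_sum_bounds:
  fixes m :: "nat \<Rightarrow> 'a::linordered_idom"
  assumes "\<And>k. k < n \<Longrightarrow> m (Suc k) \<le> m k" "\<And>k. k \<le> n \<Longrightarrow> 0 \<le> m k"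
  shows "0 \<le> (\<Sum>k\<le>n. (-1) ^ k * m k) \<and> (\<Sum>k\<le>n. (-1) ^ k * m k) \<le> m 0"
  using assms
proof (induction n arbitrary: m)
  case 0
  then show ?case by simp
next
  case (Suc n)
  have "m (Suc (Suc k)) \<le> m (Suc k)" if "k < n" for k
    using Suc.prems(1) that by simp
  moreover have "0 \<le> m (Suc k)" if "k \<le> n" for k
    using Suc.prems(2) that by simp
  ultimately have "0 \<le> (\<Sum>k\<le>n. (-1) ^ k * m (Suc k)) \<and> (\<Sum>k\<le>n. (-1) ^ k * m (Suc k)) \<le> m 1"
    using Suc.IH[of "\<lambda>k. m (Suc k)"] by simp
  moreover have "(\<Sum>k\<le>Suc n. (-1) ^ k * m k) = m 0 - (\<Sum>k\<le>n. (-1) ^ k * m (Suc k))"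
    by (subst sum.atMost_Suc_shift) (simp add: sum_negf)
  moreover have "m 1 \<le> m 0"
    using Suc.prems by auto
  ultimately show ?case by auto
qed

lemma alternating_sum_ge_first_two:
  fixes m :: "nat \<Rightarrow> 'a::linordered_idom"
  assumes "n \<ge> 1" "\<And>k. k < n \<Longrightarrow> m (Suc k) \<le> m k" "\<And>k. k \<le> n \<Longrightarrow> 0 \<le> m k"
  shows "m 0 - m 1 \<le> (\<Sum>k\<le>n. (-1) ^ k * m k)"
proof -
  obtain n' where n: "n = Suc n'"
    using assms(1) by (cases n) auto
  have "(\<Sum>k\<le>n'. (-1) ^ k * m (Suc k)) \<le> m 1"
    using alternating_sum_bounds[of n' "\<lambda>k. m (Suc k)"] assms(2,3) unfolding n by auto
  moreover have "(\<Sum>k\<le>n. (-1) ^ k * m k) = m 0 - (\<Sum>k\<le>n'. (-1) ^ k * m (Suc k))"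
    unfolding n by (subst sum.atMost_Suc_shift) (simp add: sum_negf)
  ultimately show ?thesis by simp
qed

lemma jacobiP_normalized_one_minus_two_x_ge:
  assumes "\<alpha> > -1" "\<beta> > -1" "t \<ge> 1" "0 \<le> x"
    and small: "real t * (real t + \<alpha> + \<beta> + 1) * x \<le> \<alpha> + 1"
  shows "1 - real t * (real t + \<alpha> + \<beta> + 1) * x / (\<alpha> + 1) \<le> jacobiP_normalized t \<alpha> \<beta> (1 - 2 * x)"
proof -
  let ?c = "jacobi_coeff t \<alpha> \<beta>"
  let ?T = "real t * (real t + \<alpha> + \<beta> + 1)"
  have decreasing: "?c (Suc k) * x ^ Suc k \<le> ?c k * x ^ k" if "k < t" for k
    using jacobi_coeff_Suc_mult_le[OF assms(1,2) that assms(4) small] \<open>0 \<le> x\<close>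
    by (simp add: mult.assoc[symmetric] mult_right_mono)
  have "?c 0 - ?c 1 * x \<le> jacobiP t \<alpha> \<beta> (1 - 2 * x)"
    using alternating_sum_ge_first_two[of t "\<lambda>k. ?c k * x ^ k"] decreasing
      jacobi_coeff_pos[OF assms(1,2)] \<open>t \<ge> 1\<close> \<open>0 \<le> x\<close>
    by (simp add: jacobiP_one_minus_two_x[OF assms(1,2)] mult.assoc less_imp_le)
  moreover have "?c 1 = ?c 0 * ?T / (\<alpha> + 1)"
    using jacobi_coeff_Suc[of 0 t \<alpha> \<beta>] \<open>t \<ge> 1\<close> assms(1) by (simp add: field_simps)
  ultimately have "?c 0 * (1 - ?T * x / (\<alpha> + 1)) \<le> jacobiP t \<alpha> \<beta> (1 - 2 * x)"
    by (simp add: algebra_simps)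
  moreover have "0 < ?c 0"
    using jacobi_coeff_pos[OF assms(1,2)] by simp
  ultimately show ?thesis
    unfolding jacobiP_normalized_def jacobiP_at_one[OF assms(1,2)]
    by (simp add: pos_le_divide_eq mult.commute)
qed

lemma jacobiP_normalized_cos_ge:
  assumes "\<alpha> > -1" "\<beta> > -1" "t \<ge> 1"
    and small: "real t * (real t + \<alpha> + \<beta> + 1) * \<phi>\<^sup>2 \<le> 4 * (\<alpha> + 1)"
  shows "1 - real t * (real t + \<alpha> + \<beta> + 1) * \<phi>\<^sup>2 / (4 * (\<alpha> + 1))
           \<le> jacobiP_normalized t \<alpha> \<beta> (cos \<phi>)"
proof -
  define x where "x = sin (\<phi> / 2) ^ 2"
  define T where "T = real t * (real t + \<alpha> + \<beta> + 1)"
  have cos_eq: "cos \<phi> = 1 - 2 * x"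
    using cos_double_sin[of "\<phi> / 2"] unfolding x_def by simp
  have "x \<le> (\<phi> / 2)\<^sup>2"
    unfolding x_def using abs_sin_x_le_abs_x[of "\<phi> / 2"] by (metis abs_ge_zero power2_abs power_mono)
  moreover have "0 \<le> T"
    unfolding T_def using assms by simp
  ultimately have "T * x \<le> T * (\<phi> / 2)\<^sup>2"
    by (rule mult_left_mono)
  then have Tx: "T * x \<le> T * \<phi>\<^sup>2 / 4"
    by (simp add: power_divide)
  have "T * x / (\<alpha> + 1) \<le> T * \<phi>\<^sup>2 / (4 * (\<alpha> + 1))"
    using divide_right_mono[OF Tx, of "\<alpha> + 1"] assms(1) by simp
  then have "1 - T * \<phi>\<^sup>2 / (4 * (\<alpha> + 1)) \<le> 1 - T * x / (\<alpha> + 1)"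
    by linarith
  also have "\<dots> \<le> jacobiP_normalized t \<alpha> \<beta> (cos \<phi>)"
  proof -
    have "0 \<le> x" "T * x \<le> \<alpha> + 1"
      using Tx small unfolding x_def T_def by simp_all
    then show ?thesis
      unfolding cos_eq T_def by (rule jacobiP_normalized_one_minus_two_x_ge[OF assms(1-3)])
  qed
  finally show ?thesis unfolding T_def .
qed

theorem proposition3p2:
  fixes d t :: nat and \<nu> r :: real
  assumes "d \<ge> 1" and "t \<ge> 1" and "0 < \<nu>" and "\<nu> < 1"
    and "r > 0" and "r ^ 2 = (1 - \<nu>) * (real d + 2) / (real t * (real t + real d))"
  shows "\<forall>\<phi>::real. 0 \<le> \<phi> \<and> \<phi> \<le> r \<longrightarrow>
           jacobiP_normalized t (real d / 2) (real d / 2 - 1) (cos \<phi>) \<ge> \<nu>"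
proof (intro allI impI)
  fix \<phi> :: real
  assume "0 \<le> \<phi> \<and> \<phi> \<le> r"
  then have "\<phi>\<^sup>2 \<le> r\<^sup>2"
    by (intro power_mono) auto
  define T where "T = real t * (real t + real d)"
  have "T > 0" "T * r\<^sup>2 = (1 - \<nu>) * (real d + 2)"
    using assms unfolding T_def by auto
  then have small: "T * \<phi>\<^sup>2 \<le> (1 - \<nu>) * (real d + 2)"
    using \<open>\<phi>\<^sup>2 \<le> r\<^sup>2\<close> by (metis mult_left_mono less_imp_le)
  have param: "real t * (real t + real d / 2 + (real d / 2 - 1) + 1) = T"
    and weight: "4 * (real d / 2 + 1) = 2 * (real d + 2)"
    unfolding T_def by simp_all
  have "(1 - \<nu>) * (real d + 2) \<le> 2 * (real d + 2)"
    using \<open>0 < \<nu>\<close> by (intro mult_right_mono) auto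
  with small have "T * \<phi>\<^sup>2 \<le> 2 * (real d + 2)"
    by linarith
  define A where "A = T * \<phi>\<^sup>2 / (2 * (real d + 2))"
  have "1 - A \<le> jacobiP_normalized t (real d / 2) (real d / 2 - 1) (cos \<phi>)"
    using jacobiP_normalized_cos_ge[of "real d / 2" "real d / 2 - 1" t \<phi>, unfolded param weight]
      \<open>T * \<phi>\<^sup>2 \<le> 2 * (real d + 2)\<close> assms(1,2) unfolding A_def by simp
  moreover have "2 * A \<le> 1 - \<nu>"
    unfolding A_def using small by (simp add: field_simps)
  ultimately show "jacobiP_normalized t (real d / 2) (real d / 2 - 1) (cos \<phi>) \<ge> \<nu>"
    using \<open>\<nu> < 1\<close> by linarith
qed

end
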